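(* Let $n\ge 3$. For any tuple of integers $m=(m_1,\dots,m_{n-1})$ and any word $w(A,B)\in\mathbb F_2=\langle A,B\rangle$, the kernel $\operatorname{Ker}(\Theta_n^{w,m})$ contains a subgroup isomorphic to the free group of rank $2$.
   Context: For $n\ge 2$, the flat virtual braid group $FVB_n$ is the group with generators $\sigma_1,\dots,\sigma_{n-1},\rho_1,\dots,\rho_{n-1}$ and defining relations: $\sigma_i^2=1$, $\rho_i^2=1$ for $1\le i\le n-1$; $\sigma_i\sigma_{i+1}\sigma_i=\sigma_{i+1}\sigma_i\sigma_{i+1}$, $\rho_i\rho_{i+1}\rho_i=\rho_{i+1}\rho_i\rho_{i+1}$ and $\rho_i\rho_{i+1}\sigma_i=\sigma_{i+1}\rho_i\rho_{i+1}$ for $1\le i\le n-2$; $\sigma_i\sigma_j=\sigma_j\sigma_i$, $\rho_i\rho_j=\rho_j\rho_i$ and $\rho_i\sigma_j=\sigma_j\rho_i$ for $|i-j|\ge 2$. $\mathbb F_{2n}$ is the free group on $x_1,\dots,x_n,y_1,\dots,y_n$; automorphisms compose left to right, $(\varphi\psi)(f)=\psi(\varphi(f))$; generators not mentioned are fixed. For $w(A,B)\in\mathbb F_2$ and $m\in\mathbb Z^{n-1}$, $\Theta_n^{w,m}\colon FVB_n\to\mathrm{Aut}(\mathbb F_{2n})$ is the homomorphism given by $\Theta_n^{w,m}(\sigma_i): x_i\mapsto x_{i+1}a_i,\ x_{i+1}\mapsto x_i a_i^{-1}$, where $a_i=y_{i+1}^{m_2+\dots+m_i}\,w(y_i,y_{i+1})\,y_i^{-(m_1+\dots+m_{i-1})}$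 (empty sums are $0$, so $a_1=w(y_1,y_2)$); $\Theta_n^{w,m}(\rho_i): x_i\mapsto x_{i+1}y_{i+1}^{m_i},\ x_{i+1}\mapsto x_iy_i^{-m_i},\ y_i\mapsto y_{i+1},\ y_{i+1}\mapsto y_i$. *)

theory Defs
  imports Main
begin

text \<open>A word over an alphabet 'g is a list of letters (x, e) with e = False meaning x
  and e = True meaning x^-1.\<close>

type_synonym 'g word = "('g \<times> bool) list"

definition inv_word :: "'g word \<Rightarrow> 'g word" where
  "inv_word w = rev (map (\<lambda>(x, e). (x, \<not> e)) w)"

inductive free_step :: "'g word \<Rightarrow> 'g word \<Rightarrow> bool" where
  "free_step (u @ [(x, e), (x, \<not> e)] @ v) (u @ v)"

definition free_eq :: "'g word \<Rightarrow> 'g word \<Rightarrow> bool" where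
  "free_eq = equivclp free_step"

inductive pres_step :: "'g word set \<Rightarrow> 'g word \<Rightarrow> 'g word \<Rightarrow> bool" for R where
  "pres_step R (u @ [(x, e), (x, \<not> e)] @ v) (u @ v)"
| "r \<in> R \<Longrightarrow> pres_step R (u @ r @ v) (u @ v)"

definition pres_eq :: "'g word set \<Rightarrow> 'g word \<Rightarrow> 'g word \<Rightarrow> bool" where
  "pres_eq R = equivclp (pres_step R)"

definition subst_word :: "('g \<Rightarrow> 'h word) \<Rightarrow> 'g word \<Rightarrow> 'h word" where
  "subst_word f w = concat (map (\<lambda>(x, e). if e then inv_word (f x) else f x) w)"

datatype fvb_gen = Sig nat | Rho nat

definition gw :: "fvb_gen \<Rightarrow> fvb_gen word" where
  "gw g = [(g, False)]"

definition commutator_rel :: "fvb_gen \<Rightarrow> fvb_gen \<Rightarrow> fvb_gen word" where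
  "commutator_rel a b = gw a @ gw b @ inv_word (gw b @ gw a)"

definition fvb_rels :: "nat \<Rightarrow> fvb_gen word set" where
  "fvb_rels n =
     {gw (Sig i) @ gw (Sig i) | i. 1 \<le> i \<and> i \<le> n - 1}
   \<union> {gw (Rho i) @ gw (Rho i) | i. 1 \<le> i \<and> i \<le> n - 1}
   \<union> {gw (Sig i) @ gw (Sig (i+1)) @ gw (Sig i) @
        inv_word (gw (Sig (i+1)) @ gw (Sig i) @ gw (Sig (i+1))) | i. 1 \<le> i \<and> i \<le> n - 2}
   \<union> {gw (Rho i) @ gw (Rho (i+1)) @ gw (Rho i) @
        inv_word (gw (Rho (i+1)) @ gw (Rho i) @ gw (Rho (i+1))) | i. 1 \<le> i \<and> i \<le> n - 2}
   \<union> {gw (Rho i) @ gw (Rho (i+1)) @ gw (Sig i) @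
        inv_word (gw (Sig (i+1)) @ gw (Rho i) @ gw (Rho (i+1))) | i. 1 \<le> i \<and> i \<le> n - 2}
   \<union> {commutator_rel (Sig i) (Sig j) | i j. 1 \<le> i \<and> i \<le> n - 1 \<and> 1 \<le> j \<and> j \<le> n - 1
        \<and> (i + 2 \<le> j \<or> j + 2 \<le> i)}
   \<union> {commutator_rel (Rho i) (Rho j) | i j. 1 \<le> i \<and> i \<le> n - 1 \<and> 1 \<le> j \<and> j \<le> n - 1
        \<and> (i + 2 \<le> j \<or> j + 2 \<le> i)}
   \<union> {commutator_rel (Rho i) (Sig j) | i j. 1 \<le> i \<and> i \<le> n - 1 \<and> 1 \<le> j \<and> j \<le> n - 1
        \<and> (i + 2 \<le> j \<or> j + 2 \<le> i)}"

definition fvb_idx :: "fvb_gen \<Rightarrow> nat" where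
  "fvb_idx g = (case g of Sig i \<Rightarrow> i | Rho i \<Rightarrow> i)"

definition fvb_word :: "nat \<Rightarrow> fvb_gen word \<Rightarrow> bool" where
  "fvb_word n u \<longleftrightarrow> (\<forall>(g, e) \<in> set u. 1 \<le> fvb_idx g \<and> fvb_idx g \<le> n - 1)"

definition fvb_eq :: "nat \<Rightarrow> fvb_gen word \<Rightarrow> fvb_gen word \<Rightarrow> bool" where
  "fvb_eq n = pres_eq (fvb_rels n)"

datatype f2_gen = GA | GB

datatype fgen = X nat | Y nat

definition gpow :: "'g \<Rightarrow> int \<Rightarrow> 'g word" where
  "gpow z k = (if 0 \<le> k then replicate (nat k) (z, False) else replicate (nat (- k)) (z, True))"

definition w_eval :: "f2_gen word \<Rightarrow> nat \<Rightarrow> fgen word" where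
  "w_eval w i = subst_word (\<lambda>g. case g of GA \<Rightarrow> [(Y i, False)] | GB \<Rightarrow> [(Y (i+1), False)]) w"

definition a_word :: "f2_gen word \<Rightarrow> (nat \<Rightarrow> int) \<Rightarrow> nat \<Rightarrow> fgen word" where
  "a_word w m i = gpow (Y (i+1)) (\<Sum>j\<in>{2..i}. m j) @ w_eval w i @ gpow (Y i) (- (\<Sum>j\<in>{1..<i}. m j))"

definition theta_gen :: "f2_gen word \<Rightarrow> (nat \<Rightarrow> int) \<Rightarrow> fvb_gen \<Rightarrow> fgen \<Rightarrow> fgen word" where
  "theta_gen w m g z =
     (case g of
        Sig i \<Rightarrow>
          (if z = X i then [(X (i+1), False)] @ a_word w m i
           else if z = X (i+1) then [(X i, False)] @ inv_word (a_word w m i)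
           else [(z, False)])
      | Rho i \<Rightarrow>
          (if z = X i then [(X (i+1), False)] @ gpow (Y (i+1)) (m i)
           else if z = X (i+1) then [(X i, False)] @ gpow (Y i) (- m i)
           else if z = Y i then [(Y (i+1), False)]
           else if z = Y (i+1) then [(Y i, False)]
           else [(z, False)]))"

text \<open>Each Theta(sigma_i), Theta(rho_i) is an involution, so Theta(g^-1) = Theta(g);
  hence the inverse flag of a letter is irrelevant.  Automorphisms compose left to right:
  Theta(g_1 ... g_k)(f) = Theta(g_k)(... Theta(g_1)(f)).\<close>
fun theta_apply :: "f2_gen word \<Rightarrow> (nat \<Rightarrow> int) \<Rightarrow> fvb_gen word \<Rightarrow> fgen word \<Rightarrow> fgen word" where
  "theta_apply w m [] f = f"
| "theta_apply w m ((g, e) # u) f = theta_apply w m u (subst_word (theta_gen w m g) f)"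

definition in_theta_kernel :: "nat \<Rightarrow> f2_gen word \<Rightarrow> (nat \<Rightarrow> int) \<Rightarrow> fvb_gen word \<Rightarrow> bool" where
  "in_theta_kernel n w m u \<longleftrightarrow>
     (\<forall>j. 1 \<le> j \<and> j \<le> n \<longrightarrow>
        free_eq (theta_apply w m u [(X j, False)]) [(X j, False)] \<and>
        free_eq (theta_apply w m u [(Y j, False)]) [(Y j, False)])"

text \<open>Ker(Theta) contains a subgroup isomorphic to F_2: there are kernel elements u, v
  such that the homomorphism F_2 \<rightarrow> FVB_n, A \<mapsto> u, B \<mapsto> v, is injective
  (its image is then a subgroup of the kernel isomorphic to F_2).\<close>
definition kernel_contains_F2 :: "nat \<Rightarrow> f2_gen word \<Rightarrow> (nat \<Rightarrow> int) \<Rightarrow> bool" where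
  "kernel_contains_F2 n w m \<longleftrightarrow>
     (\<exists>u v. fvb_word n u \<and> fvb_word n v \<and>
        in_theta_kernel n w m u \<and> in_theta_kernel n w m v \<and>
        (\<forall>r :: f2_gen word. \<not> free_eq r [] \<longrightarrow>
           \<not> fvb_eq n (subst_word (\<lambda>g. case g of GA \<Rightarrow> u | GB \<Rightarrow> v) r) []))"

end

theory Submission
  imports Defs
begin

text \<open>
  Let t12 = sigma_1 rho_1 sigma_1 rho_1, and let t13 and t23 be its conjugates by rho_2 and
  then by rho_1.  Theta(t_ij) fixes every y and multiplies x_i and x_j on the right by words
  in the y's, fixing the other x's.  These right factors ("tails") multiply under composition,
  and the tails of a commutator vanish wherever those of one factor do.  Hence the nested
  commutators word_A = [[t13, t23], t12] and word_B = t13\<inverse> [[t12, t13], t23\<inverse>] t13 have no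
  tails at all: they lie in the kernel.

  To see that word_A and word_B generate a free group, follow the strands starting at
  positions 1, 2, 3 and record a letter of F_2 whenever a sigma_i exchanges two of them.
  Every defining relator of FVB_n records a trivial word, so this record is well defined on
  FVB_n.  The words word_A and word_B return the strands to their places and record
  [[b, a], a] and b\<inverse> [[a, b], a\<inverse>] b, where a = A^2 and b = B^2.  No cancellation can occur
  between consecutive blocks of these two words, so a nontrivial word in word_A and word_B
  records a nontrivial word and is itself nontrivial.
\<close>

section \<open>Words in free groups\<close>

abbreviation letter :: "'g \<Rightarrow> 'g word" where
  "letter z \<equiv> [(z, False)]"

definition inv_letter :: "'g \<times> bool \<Rightarrow> 'g \<times> bool" where
  "inv_letter a = (fst a, \<not> snd a)"

lemma inv_letter_inv_letter [simp]: "inv_letter (inv_letter a) = a"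
  by (simp add: inv_letter_def)

lemma fst_inv_letter [simp]: "fst (inv_letter a) = fst a"
  by (simp add: inv_letter_def)

lemma inv_word_Nil [simp]: "inv_word [] = []"
  by (simp add: inv_word_def)

lemma inv_word_Cons [simp]: "inv_word (a # u) = inv_word u @ [inv_letter a]"
  by (cases a) (simp add: inv_word_def inv_letter_def)

lemma inv_word_append [simp]: "inv_word (u @ v) = inv_word v @ inv_word u"
  by (simp add: inv_word_def)

lemma inv_word_inv_word [simp]: "inv_word (inv_word u) = u"
  by (induction u) auto


lemma equivclp_map:
  assumes "\<And>a b. r a b \<Longrightarrow> equivclp s (f a) (f b)" and "equivclp r a b"
  shows "equivclp s (f a) (f b)"
  using assms(2)
proof (induction rule: equivclp_induct)
  case base
  then show ?case by simp
next
  case (step y z)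
  then show ?case using assms(1) by (meson equivclp_sym equivclp_trans)
qed

lemma free_eq_refl [simp]: "free_eq u u"
  by (simp add: free_eq_def)

lemma free_eq_sym: "free_eq u v \<Longrightarrow> free_eq v u"
  by (simp add: free_eq_def equivclp_sym)

lemma free_eq_trans [trans]: "free_eq u v \<Longrightarrow> free_eq v x \<Longrightarrow> free_eq u x"
  unfolding free_eq_def by (rule equivclp_trans)

lemma free_eq_cancel_pair: "free_eq (u @ [a, inv_letter a] @ v) (u @ v)"
  using free_step.intros[of u "fst a" "snd a" v]
  by (simp add: free_eq_def inv_letter_def r_into_equivclp)

lemma free_step_append_cong: "free_step u v \<Longrightarrow> free_step (p @ u @ q) (p @ v @ q)"
proof (induction rule: free_step.induct)
  case (1 u x e v)
  have "free_step ((p @ u) @ [(x, e), (x, \<not> e)] @ (v @ q)) ((p @ u) @ (v @ q))"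
    by (rule free_step.intros)
  then show ?case by simp
qed

lemma free_eq_append_cong: "free_eq u v \<Longrightarrow> free_eq (p @ u @ q) (p @ v @ q)"
  unfolding free_eq_def
  by (rule equivclp_map[where f = "\<lambda>x. p @ x @ q"]) (auto intro: free_step_append_cong)

lemma free_eq_append: "free_eq u u' \<Longrightarrow> free_eq v v' \<Longrightarrow> free_eq (u @ v) (u' @ v')"
  using free_eq_append_cong[of u u' "[]" v] free_eq_append_cong[of v v' u' "[]"]
  by (auto intro: free_eq_trans)

lemma free_eq_Cons: "free_eq u v \<Longrightarrow> free_eq (a # u) (a # v)"
  using free_eq_append[of "[a]" "[a]" u v] by simp

lemma free_eq_drop_Nil: "free_eq x [] \<Longrightarrow> free_eq (p @ x @ q) (p @ q)"
  using free_eq_append_cong[of x "[]" p q] by simp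

lemma free_eq_append_inv_word: "free_eq (u @ inv_word u) []"
proof (induction u)
  case Nil
  then show ?case by simp
next
  case (Cons a u)
  have "free_eq ([a] @ (u @ inv_word u) @ [inv_letter a]) ([] @ [a, inv_letter a] @ [])"
    using free_eq_drop_Nil[OF Cons, of "[a]" "[inv_letter a]"] by simp
  also have "free_eq \<dots> []"
    using free_eq_cancel_pair[of "[]" a "[]"] by simp
  finally show ?case by simp
qed

lemma free_eq_inv_word_append: "free_eq (inv_word u @ u) []"
  using free_eq_append_inv_word[of "inv_word u"] by simp

lemma free_step_inv_word: "free_step u v \<Longrightarrow> free_step (inv_word u) (inv_word v)"
proof (induction rule: free_step.induct)
  case (1 u x e v)
  have "free_step (inv_word v @ [(x, e), (x, \<not> e)] @ inv_word u) (inv_word v @ inv_word u)"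
    by (rule free_step.intros)
  then show ?case by (simp add: inv_letter_def)
qed

lemma free_eq_inv_word: "free_eq u v \<Longrightarrow> free_eq (inv_word u) (inv_word v)"
  unfolding free_eq_def
  by (rule equivclp_map[where f = inv_word]) (auto intro: free_step_inv_word)

lemma free_eq_inv_word_Nil: "free_eq u [] \<Longrightarrow> free_eq (inv_word u) []"
  using free_eq_inv_word by fastforce

lemma free_eq_conj_Nil: "free_eq x [] \<Longrightarrow> free_eq (inv_word c @ x @ c) []"
  using free_eq_drop_Nil[of x "inv_word c" c] free_eq_inv_word_append[of c]
  by (auto intro: free_eq_trans)

lemma free_eq_append_Nil_imp_right: "free_eq (u @ v) [] \<Longrightarrow> free_eq v (inv_word u)"
proof -
  assume uv: "free_eq (u @ v) []"
  have "free_eq v ([] @ (inv_word u @ u) @ v)"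
    using free_eq_drop_Nil[OF free_eq_inv_word_append, of "[]" u v] by (simp add: free_eq_sym)
  also have "free_eq \<dots> (inv_word u @ (u @ v) @ [])" by simp
  also have "free_eq \<dots> (inv_word u)"
    using free_eq_drop_Nil[OF uv, of "inv_word u" "[]"] by simp
  finally show ?thesis .
qed

lemma free_eq_append_right_imp: "free_eq (u @ c) v \<Longrightarrow> free_eq u (v @ inv_word c)"
proof -
  assume uc: "free_eq (u @ c) v"
  have "free_eq u (u @ (c @ inv_word c) @ [])"
    using free_eq_drop_Nil[OF free_eq_append_inv_word, of u c "[]"] by (simp add: free_eq_sym)
  also have "\<dots> = (u @ c) @ inv_word c" by simp
  also have "free_eq \<dots> (v @ inv_word c)" by (rule free_eq_append[OF uc free_eq_refl])
  finally show ?thesis .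
qed

lemma free_eq_append_Nil_imp_left: "free_eq (u @ v) [] \<Longrightarrow> free_eq u (inv_word v)"
  using free_eq_append_Nil_imp_right[of "inv_word v" "inv_word u"] free_eq_inv_word_Nil[of "u @ v"]
    free_eq_inv_word[of "inv_word u" v]
  by simp

lemma free_eq_Cons_cancel: "free_eq (a # u) (a # v) \<Longrightarrow> free_eq u v"
proof -
  assume "free_eq (a # u) (a # v)"
  then have "free_eq ([] @ [inv_letter a, a] @ u) ([] @ [inv_letter a, a] @ v)"
    using free_eq_Cons by simp
  then show ?thesis
    using free_eq_cancel_pair[of "[]" "inv_letter a"] by (auto intro: free_eq_trans free_eq_sym)
qed

definition push_letter :: "'g \<times> bool \<Rightarrow> 'g word \<Rightarrow> 'g word" where
  "push_letter a z = (case z of [] \<Rightarrow> [a] | b # z' \<Rightarrow> if b = inv_letter a then z' else a # z)"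

definition reduce :: "'g word \<Rightarrow> 'g word" where
  "reduce u = foldr push_letter u []"

fun reduced :: "'g word \<Rightarrow> bool" where
  "reduced (a # b # u) \<longleftrightarrow> b \<noteq> inv_letter a \<and> reduced (b # u)"
| "reduced _ \<longleftrightarrow> True"

lemma reduced_tl: "reduced (a # u) \<Longrightarrow> reduced u"
  by (cases u) auto

lemma reduced_push_letter: "reduced z \<Longrightarrow> reduced (push_letter a z)"
  by (cases z) (auto simp: push_letter_def dest: reduced_tl)

lemma push_letter_inv_letter: "reduced z \<Longrightarrow> push_letter (inv_letter a) (push_letter a z) = z"
  by (cases z; cases "tl z") (auto simp: push_letter_def)

lemma reduce_Nil [simp]: "reduce [] = []"
  by (simp add: reduce_def)

lemma reduce_Cons: "reduce (a # u) = push_letter a (reduce u)"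
  by (simp add: reduce_def)

lemma reduced_reduce: "reduced (reduce u)"
  by (induction u) (auto simp: reduce_Cons intro: reduced_push_letter)

lemma reduce_reduced: "reduced u \<Longrightarrow> reduce u = u"
proof (induction u)
  case Nil
  then show ?case by simp
next
  case (Cons a u)
  then have "reduce u = u" by (auto dest: reduced_tl)
  then show ?case using Cons.prems by (cases u) (auto simp: reduce_Cons push_letter_def)
qed

lemma free_step_reduce: "free_step u v \<Longrightarrow> reduce u = reduce v"
proof (induction rule: free_step.induct)
  case (1 u x e v)
  have "push_letter (x, e) (push_letter (x, \<not> e) (reduce v)) = reduce v"
    using push_letter_inv_letter[OF reduced_reduce, of "(x, \<not> e)" v] by (simp add: inv_letter_def)
  then show ?case by (simp add: reduce_def)
qed

lemma reduce_reduce [simp]: "reduce (reduce u) = reduce u"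
  by (simp add: reduce_reduced reduced_reduce)

lemma free_eq_reduce_eq: "free_eq u v \<Longrightarrow> reduce u = reduce v"
  unfolding free_eq_def
  by (induction rule: equivclp_induct) (auto dest: free_step_reduce)

lemma free_eq_reduce: "free_eq u (reduce u)"
proof (induction u)
  case Nil
  then show ?case by simp
next
  case (Cons a u)
  have "free_eq (a # u) (a # reduce u)" by (rule free_eq_Cons[OF Cons])
  also have "free_eq (a # reduce u) (push_letter a (reduce u))"
    using free_eq_cancel_pair[of "[]" a] by (auto simp: push_letter_def split: list.split)
  finally show ?case by (simp add: reduce_Cons)
qed

lemma free_eq_iff_reduce_eq: "free_eq u v \<longleftrightarrow> reduce u = reduce v"
  by (metis free_eq_reduce free_eq_reduce_eq free_eq_sym free_eq_trans)

lemma free_eq_Nil_iff: "free_eq u [] \<longleftrightarrow> reduce u = []"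
  by (simp add: free_eq_iff_reduce_eq)

lemma reduced_append:
  "reduced u \<Longrightarrow> reduced v \<Longrightarrow> (u \<noteq> [] \<Longrightarrow> v \<noteq> [] \<Longrightarrow> hd v \<noteq> inv_letter (last u))
    \<Longrightarrow> reduced (u @ v)"
proof (induction u rule: reduced.induct)
  case ("2_2" a)
  then show ?case by (cases v) auto
qed auto

definition subst_letter :: "('g \<Rightarrow> 'h word) \<Rightarrow> 'g \<times> bool \<Rightarrow> 'h word" where
  "subst_letter f a = (if snd a then inv_word (f (fst a)) else f (fst a))"

lemma subst_letter_Pair [simp]: "subst_letter f (z, e) = (if e then inv_word (f z) else f z)"
  by (simp add: subst_letter_def)

lemma subst_word_Nil [simp]: "subst_word f [] = []"
  by (simp add: subst_word_def)

lemma subst_word_Cons [simp]: "subst_word f (a # u) = subst_letter f a @ subst_word f u"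
  by (cases a) (simp add: subst_word_def subst_letter_def)

lemma subst_word_append [simp]: "subst_word f (u @ v) = subst_word f u @ subst_word f v"
  by (simp add: subst_word_def)

lemma subst_word_inv_word [simp]: "subst_word f (inv_word u) = inv_word (subst_word f u)"
  by (induction u) (auto simp: subst_letter_def inv_letter_def)

lemma subst_word_subst_word:
  "subst_word f (subst_word g u) = subst_word (\<lambda>z. subst_word f (g z)) u"
  by (induction u) (auto simp: subst_letter_def)

lemma subst_word_letter: "subst_word letter u = u"
  by (induction u) (auto simp: subst_letter_def inv_letter_def)

lemma free_eq_subst_word: "free_eq u v \<Longrightarrow> free_eq (subst_word f u) (subst_word f v)"
proof -
  have "free_eq (subst_word f u) (subst_word f v)" if "free_step u v" for u v
    using that
  proof (induction rule: free_step.induct)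
    case (1 u x e v)
    have "free_eq (subst_word f [(x, e), (x, \<not> e)]) []"
      by (cases e) (auto simp: subst_letter_def intro: free_eq_inv_word_append free_eq_append_inv_word)
    then show ?case using free_eq_drop_Nil by fastforce
  qed
  then show "free_eq u v \<Longrightarrow> ?thesis"
    unfolding free_eq_def by (rule equivclp_map[where f = "subst_word f"])
qed

lemma free_eq_subst_word_pointwise:
  "(\<And>z. z \<in> fst ` set u \<Longrightarrow> free_eq (f z) (g z)) \<Longrightarrow> free_eq (subst_word f u) (subst_word g u)"
  by (induction u) (auto simp: subst_letter_def intro!: free_eq_append free_eq_inv_word)

lemma reduced_subst_word:
  assumes blocks: "\<And>a. reduced (subst_letter f a) \<and> subst_letter f a \<noteq> []"
    and junctions: "\<And>a b. b \<noteq> inv_letter a \<Longrightarrow> hd (subst_letter f b) \<noteq> inv_letter (last (subst_letter f a))"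
    and "reduced u" "u \<noteq> []"
  shows "reduced (subst_word f u) \<and> subst_word f u \<noteq> [] \<and> hd (subst_word f u) = hd (subst_letter f (hd u))"
  using assms(3,4)
proof (induction u rule: reduced.induct)
  case (1 a b u)
  then have "b \<noteq> inv_letter a" by simp
  with 1 have "reduced (subst_letter f a @ subst_word f (b # u))"
    using blocks[of a] junctions by (intro reduced_append) auto
  then show ?case using blocks[of a] by simp
qed (use blocks in auto)

lemma subst_word_nontrivial:
  assumes blocks: "\<And>a. reduced (subst_letter f a) \<and> subst_letter f a \<noteq> []"
    and junctions: "\<And>a b. b \<noteq> inv_letter a \<Longrightarrow> hd (subst_letter f b) \<noteq> inv_letter (last (subst_letter f a))"
    and "\<not> free_eq u []"
  shows "\<not> free_eq (subst_word f u) []"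
proof
  assume "free_eq (subst_word f u) []"
  moreover have "free_eq (subst_word f (reduce u)) (subst_word f u)"
    by (rule free_eq_subst_word) (rule free_eq_sym[OF free_eq_reduce])
  ultimately have "reduce (subst_word f (reduce u)) = []"
    by (simp add: free_eq_iff_reduce_eq)
  moreover have "reduce u \<noteq> []" using assms(3) by (simp add: free_eq_iff_reduce_eq)
  ultimately show False
    using reduced_subst_word[OF blocks junctions reduced_reduce] by (simp add: reduce_reduced)
qed

section \<open>The automorphisms Theta\<close>

definition swap_adj :: "nat \<Rightarrow> nat \<Rightarrow> nat" where
  "swap_adj i k = (if k = i then Suc i else if k = Suc i then i else k)"

lemma swap_adj_swap_adj [simp]: "swap_adj i (swap_adj i k) = k"
  by (simp add: swap_adj_def)

lemma swap_adj_eq_iff: "swap_adj i x = y \<longleftrightarrow> x = swap_adj i y"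
  by (auto simp: swap_adj_def)

definition y_index :: "fvb_gen \<Rightarrow> nat \<Rightarrow> nat" where
  "y_index g j = (case g of Sig i \<Rightarrow> j | Rho i \<Rightarrow> swap_adj i j)"

definition y_word :: "fgen word \<Rightarrow> bool" where
  "y_word c \<longleftrightarrow> (\<forall>a \<in> set c. \<exists>j. fst a = Y j)"

lemma y_word_Nil [simp]: "y_word []"
  and y_word_Cons [simp]: "y_word (a # c) \<longleftrightarrow> (\<exists>j. fst a = Y j) \<and> y_word c"
  and y_word_append [simp]: "y_word (c @ d) \<longleftrightarrow> y_word c \<and> y_word d"
  and y_word_inv_word [simp]: "y_word (inv_word c) \<longleftrightarrow> y_word c"
  and y_word_gpow [simp]: "y_word (gpow (Y j) k)"
  by (auto simp: y_word_def inv_word_def gpow_def)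

lemma y_word_subst_word: "(\<And>z. z \<in> fst ` set c \<Longrightarrow> y_word (f z)) \<Longrightarrow> y_word (subst_word f c)"
  by (induction c) (auto simp: subst_letter_def)

lemma y_word_a_word [simp]: "y_word (a_word w m i)"
  unfolding a_word_def w_eval_def by (auto intro!: y_word_subst_word split: f2_gen.splits)

lemma subst_word_gpow: "f y = letter y' \<Longrightarrow> subst_word f (gpow y k) = gpow y' k"
  by (induction "nat \<bar>k\<bar>" arbitrary: k) (auto simp: gpow_def subst_word_def inv_letter_def)

lemma gpow_uminus: "gpow y (- k) = inv_word (gpow y k)"
  by (auto simp: gpow_def inv_word_def)

lemma theta_gen_Y [simp]: "theta_gen w m g (Y j) = letter (Y (y_index g j))"
  by (cases g) (auto simp: theta_gen_def y_index_def swap_adj_def)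

lemma theta_gen_X: "\<exists>c. theta_gen w m g (X k) = (X (swap_adj (fvb_idx g) k), False) # c \<and> y_word c"
  by (cases g) (auto simp: theta_gen_def swap_adj_def fvb_idx_def)

lemma theta_gen_involution: "free_eq (subst_word (theta_gen w m g) (theta_gen w m g z)) (letter z)"
proof (cases g)
  case (Sig i)
  have fix_y: "subst_word (theta_gen w m g) c = c" if "y_word c" for c
    using that Sig
    by (induction c) (auto simp: subst_letter_def y_index_def inv_letter_def)
  have "free_eq (a # inv_word c @ c) [a]" "free_eq (a # c @ inv_word c) [a]" for a :: "fgen \<times> bool" and c
    using free_eq_Cons[OF free_eq_inv_word_append, of a c] free_eq_Cons[OF free_eq_append_inv_word, of a c]
    by simp_all
  then show ?thesis using Sig fix_y by (auto simp: theta_gen_def)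
next
  case (Rho i)
  have "subst_word (theta_gen w m g) (gpow (Y j) k) = gpow (Y (swap_adj i j)) k" for j k
    using Rho by (simp add: subst_word_gpow y_index_def)
  then show ?thesis
    using Rho free_eq_Cons[OF free_eq_inv_word_append] free_eq_Cons[OF free_eq_append_inv_word]
    by (cases z) (auto simp: theta_gen_def swap_adj_def gpow_uminus)
qed

lemma theta_apply_Cons_fst [simp]:
  "theta_apply w m (a # u) f = theta_apply w m u (subst_word (theta_gen w m (fst a)) f)"
  by (cases a) simp

lemma theta_apply_append: "theta_apply w m (u @ v) f = theta_apply w m v (theta_apply w m u f)"
  by (induction u arbitrary: f) auto

lemma theta_apply_Nil_word [simp]: "theta_apply w m u [] = []"
  by (induction u) auto

lemma theta_apply_append_word:
  "theta_apply w m u (f @ f') = theta_apply w m u f @ theta_apply w m u f'"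
  by (induction u arbitrary: f f') auto

lemma theta_apply_inv_word: "theta_apply w m u (inv_word f) = inv_word (theta_apply w m u f)"
  by (induction u arbitrary: f) auto

lemma theta_apply_eq_subst_word:
  "theta_apply w m u f = subst_word (\<lambda>z. theta_apply w m u (letter z)) f"
proof (induction f)
  case (Cons a f)
  have "theta_apply w m u [a] = subst_letter (\<lambda>z. theta_apply w m u (letter z)) a"
    using theta_apply_inv_word[of w m u "letter (fst a)"]
    by (cases a) (auto simp: subst_letter_def inv_letter_def)
  then show ?case using Cons theta_apply_append_word[of w m u "[a]" f] by simp
qed simp

lemma free_eq_theta_apply: "free_eq f f' \<Longrightarrow> free_eq (theta_apply w m u f) (theta_apply w m u f')"
  by (induction u arbitrary: f f') (auto intro: free_eq_subst_word)

lemma theta_apply_append_rev: "free_eq (theta_apply w m (u @ rev u) f) f"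
proof (induction u arbitrary: f)
  case (Cons a u)
  let ?G = "subst_word (theta_gen w m (fst a))"
  have "theta_apply w m ((a # u) @ rev (a # u)) f = ?G (theta_apply w m (u @ rev u) (?G f))"
    by (simp add: theta_apply_append)
  also have "free_eq \<dots> (?G (?G f))" by (rule free_eq_subst_word[OF Cons])
  also have "?G (?G f) = subst_word (\<lambda>z. ?G (theta_gen w m (fst a) z)) f"
    by (rule subst_word_subst_word)
  also have "free_eq \<dots> (subst_word letter f)"
    by (rule free_eq_subst_word_pointwise) (rule theta_gen_involution)
  finally show ?case by (simp add: subst_word_letter)
qed simp

fun x_target :: "fvb_gen word \<Rightarrow> nat \<Rightarrow> nat" where
  "x_target [] k = k"
| "x_target (a # u) k = x_target u (swap_adj (fvb_idx (fst a)) k)"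

fun y_target :: "fvb_gen word \<Rightarrow> nat \<Rightarrow> nat" where
  "y_target [] j = j"
| "y_target (a # u) j = y_target u (y_index (fst a) j)"

lemma x_target_append: "x_target (u @ v) k = x_target v (x_target u k)"
  by (induction u arbitrary: k) auto

lemma x_target_append_rev [simp]: "x_target (u @ rev u) k = k"
  by (induction u arbitrary: k) (auto simp: x_target_append)

lemma theta_apply_Y: "theta_apply w m u (letter (Y j)) = letter (Y (y_target u j))"
  by (induction u arbitrary: j) auto

lemma y_word_theta_apply: "y_word c \<Longrightarrow> y_word (theta_apply w m u c)"
  unfolding theta_apply_eq_subst_word[of w m u c]
  by (rule y_word_subst_word) (auto simp: y_word_def theta_apply_Y)

definition x_tail :: "f2_gen word \<Rightarrow> (nat \<Rightarrow> int) \<Rightarrow> fvb_gen word \<Rightarrow> nat \<Rightarrow> fgen word" where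
  "x_tail w m u k = tl (theta_apply w m u (letter (X k)))"

lemma theta_apply_X_shape:
  "\<exists>c. theta_apply w m u (letter (X k)) = (X (x_target u k), False) # c \<and> y_word c"
proof (induction u arbitrary: k)
  case (Cons a u)
  let ?k = "swap_adj (fvb_idx (fst a)) k"
  obtain c where c: "theta_gen w m (fst a) (X k) = letter (X ?k) @ c" "y_word c"
    using theta_gen_X by fastforce
  obtain d where d: "theta_apply w m u (letter (X ?k)) = (X (x_target (a # u) k), False) # d" "y_word d"
    using Cons.IH by auto
  have "theta_apply w m (a # u) (letter (X k)) = theta_apply w m u (letter (X ?k) @ c)"
    using c(1) by simp
  also have "\<dots> = (X (x_target (a # u) k), False) # d @ theta_apply w m u c"
    by (simp only: theta_apply_append_word d) simp
  finally show ?case using c(2) d(2) y_word_theta_apply by auto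
qed simp

lemma theta_apply_X: "theta_apply w m u (letter (X k)) = (X (x_target u k), False) # x_tail w m u k"
  using theta_apply_X_shape[of w m u k] by (auto simp: x_tail_def)

lemma y_word_x_tail [simp]: "y_word (x_tail w m u k)"
  using theta_apply_X_shape[of w m u k] by (auto simp: x_tail_def)

lemma theta_apply_fixes_y_word:
  assumes "\<And>j. free_eq (theta_apply w m u (letter (Y j))) (letter (Y j))" and "y_word c"
  shows "free_eq (theta_apply w m u c) c"
proof -
  have "free_eq (subst_word (\<lambda>z. theta_apply w m u (letter z)) c) (subst_word letter c)"
    using assms by (intro free_eq_subst_word_pointwise) (auto simp: y_word_def)
  then show ?thesis by (simp add: subst_word_letter flip: theta_apply_eq_subst_word)
qed

lemma x_tail_rev:
  "free_eq (x_tail w m (rev u) (x_target u k)) (inv_word (theta_apply w m (rev u) (x_tail w m u k)))"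
proof -
  have "(X k, False) # x_tail w m (rev u) (x_target u k) @ theta_apply w m (rev u) (x_tail w m u k)
      = theta_apply w m (rev u) (letter (X (x_target u k)) @ x_tail w m u k)"
    using x_target_append_rev[of u k]
    by (simp only: theta_apply_append_word theta_apply_X x_target_append) simp
  also have "\<dots> = theta_apply w m (u @ rev u) (letter (X k))"
    by (simp only: theta_apply_append theta_apply_X[of w m u] append_Cons append_Nil)
  also have "free_eq \<dots> (letter (X k))"
    by (rule theta_apply_append_rev)
  finally show ?thesis by (rule free_eq_append_Nil_imp_left[OF free_eq_Cons_cancel])
qed

section \<open>Tails\<close>

definition x_tails :: "f2_gen word \<Rightarrow> (nat \<Rightarrow> int) \<Rightarrow> fvb_gen word \<Rightarrow> (nat \<Rightarrow> fgen word) \<Rightarrow> bool" where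
  "x_tails w m u C \<longleftrightarrow>
     (\<forall>j. free_eq (theta_apply w m u (letter (Y j))) (letter (Y j))) \<and>
     (\<forall>k. free_eq (theta_apply w m u (letter (X k))) ((X k, False) # C k) \<and> y_word (C k))"

definition supported_in :: "f2_gen word \<Rightarrow> (nat \<Rightarrow> int) \<Rightarrow> fvb_gen word \<Rightarrow> nat set \<Rightarrow> bool" where
  "supported_in w m u S \<longleftrightarrow> (\<exists>C. x_tails w m u C \<and> (\<forall>k. k \<notin> S \<longrightarrow> free_eq (C k) []))"

lemma x_tails_append:
  assumes u: "x_tails w m u C" and v: "x_tails w m v D"
  shows "x_tails w m (u @ v) (\<lambda>k. D k @ C k)"
  unfolding x_tails_def
proof (intro conjI allI)
  fix j
  have "free_eq (theta_apply w m v (theta_apply w m u (letter (Y j)))) (theta_apply w m v (letter (Y j)))"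
    using u by (auto simp: x_tails_def intro: free_eq_theta_apply)
  also have "free_eq \<dots> (letter (Y j))"
    using v by (auto simp: x_tails_def)
  finally show "free_eq (theta_apply w m (u @ v) (letter (Y j))) (letter (Y j))"
    by (simp add: theta_apply_append)
next
  fix k
  have "free_eq (theta_apply w m v (theta_apply w m u (letter (X k))))
      (theta_apply w m v (letter (X k) @ C k))"
    using u by (auto simp: x_tails_def intro: free_eq_theta_apply)
  also have "\<dots> = theta_apply w m v (letter (X k)) @ theta_apply w m v (C k)"
    by (rule theta_apply_append_word)
  also have "free_eq \<dots> (((X k, False) # D k) @ C k)"
    using u v by (intro free_eq_append) (auto simp: x_tails_def intro: theta_apply_fixes_y_word)
  finally show "free_eq (theta_apply w m (u @ v) (letter (X k))) ((X k, False) # D k @ C k)"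
    by (simp add: theta_apply_append)
  show "y_word (D k @ C k)"
    using u v by (simp add: x_tails_def)
qed

lemma x_tails_rev:
  assumes u: "x_tails w m u C"
  shows "x_tails w m (rev u) (\<lambda>k. inv_word (C k))"
proof -
  have Y: "free_eq (theta_apply w m (rev u) (letter (Y j))) (letter (Y j))" for j
  proof -
    have "free_eq (theta_apply w m (rev u) (letter (Y j)))
        (theta_apply w m (rev u) (theta_apply w m u (letter (Y j))))"
      using u by (auto simp: x_tails_def intro: free_eq_theta_apply free_eq_sym)
    also have "free_eq \<dots> (letter (Y j))"
      using theta_apply_append_rev by (metis theta_apply_append)
    finally show ?thesis .
  qed
  have "free_eq (theta_apply w m (rev u) (letter (X k))) ((X k, False) # inv_word (C k))" for k
  proof -
    have "free_eq (theta_apply w m (rev u) (letter (X k)) @ C k)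
        (theta_apply w m (rev u) (letter (X k)) @ theta_apply w m (rev u) (C k))"
      using Y u by (intro free_eq_append free_eq_sym[OF theta_apply_fixes_y_word]) (auto simp: x_tails_def)
    also have "\<dots> = theta_apply w m (rev u) (letter (X k) @ C k)"
      by (simp only: theta_apply_append_word)
    also have "free_eq \<dots> (theta_apply w m (rev u) (theta_apply w m u (letter (X k))))"
      using u by (auto simp: x_tails_def intro: free_eq_theta_apply free_eq_sym)
    also have "free_eq \<dots> (letter (X k))"
      using theta_apply_append_rev by (metis theta_apply_append)
    finally show ?thesis using free_eq_append_right_imp by fastforce
  qed
  with Y u show ?thesis by (simp add: x_tails_def)
qed

lemma supported_in_mono: "supported_in w m u S \<Longrightarrow> S \<subseteq> T \<Longrightarrow> supported_in w m u T"
  unfolding supported_in_def by blast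

lemma supported_in_rev: "supported_in w m u S \<Longrightarrow> supported_in w m (rev u) S"
  unfolding supported_in_def by (auto intro!: x_tails_rev free_eq_inv_word_Nil)

definition commutator :: "'a list \<Rightarrow> 'a list \<Rightarrow> 'a list" where
  "commutator u v = u @ v @ rev u @ rev v"

lemma supported_in_commutator:
  assumes "supported_in w m u S" and "supported_in w m v T"
  shows "supported_in w m (commutator u v) (S \<inter> T)"
proof -
  obtain C where C: "x_tails w m u C" "\<And>k. k \<notin> S \<Longrightarrow> free_eq (C k) []"
    using assms(1) by (auto simp: supported_in_def)
  obtain D where D: "x_tails w m v D" "\<And>k. k \<notin> T \<Longrightarrow> free_eq (D k) []"
    using assms(2) by (auto simp: supported_in_def)
  define E where "E k = inv_word (D k) @ inv_word (C k) @ D k @ C k" for k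
  have "x_tails w m (((u @ v) @ rev u) @ rev v) E"
    unfolding E_def by (intro x_tails_append x_tails_rev C D)
  moreover have "free_eq (E k) []" if "k \<notin> S \<inter> T" for k
  proof (cases "k \<in> S")
    case False
    note C0 = C(2)[OF False]
    have "free_eq (E k) (inv_word (D k) @ D k @ C k)"
      unfolding E_def using free_eq_drop_Nil[OF free_eq_inv_word_Nil[OF C0], of "inv_word (D k)"] .
    also have "free_eq \<dots> ((inv_word (D k) @ D k) @ [])"
      using free_eq_drop_Nil[OF C0, of "inv_word (D k) @ D k" "[]"] by simp
    also have "free_eq \<dots> []"
      using free_eq_inv_word_append by simp
    finally show ?thesis .
  next
    case True
    with that have "k \<notin> T" by simp
    note D0 = D(2)[OF this]
    have "free_eq (E k) ([] @ inv_word (C k) @ D k @ C k)"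
      unfolding E_def using free_eq_drop_Nil[OF free_eq_inv_word_Nil[OF D0], of "[]"] by simp
    also have "free_eq \<dots> (inv_word (C k) @ C k)"
      using free_eq_drop_Nil[OF D0, of "inv_word (C k)" "C k"] by simp
    also have "free_eq \<dots> []"
      by (rule free_eq_inv_word_append)
    finally show ?thesis .
  qed
  ultimately show ?thesis
    unfolding supported_in_def commutator_def by auto
qed

lemma theta_apply_conj_Y:
  assumes "\<And>j. free_eq (theta_apply w m t (letter (Y j))) (letter (Y j))"
  shows "free_eq (theta_apply w m (g @ t @ rev g) (letter (Y j))) (letter (Y j))"
proof -
  have "theta_apply w m (g @ t @ rev g) (letter (Y j))
      = theta_apply w m (rev g) (theta_apply w m t (letter (Y (y_target g j))))"
    by (simp only: theta_apply_append theta_apply_Y[of w m g])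
  also have "free_eq \<dots> (theta_apply w m (rev g) (letter (Y (y_target g j))))"
    by (rule free_eq_theta_apply[OF assms])
  also have "\<dots> = theta_apply w m (g @ rev g) (letter (Y j))"
    by (simp only: theta_apply_append theta_apply_Y[of w m g])
  also have "free_eq \<dots> (letter (Y j))"
    by (rule theta_apply_append_rev)
  finally show ?thesis .
qed

text \<open>With x_k c_k the image of x_k under g and \<theta> the action of g\<inverse>, the new tail of x_k is the
  conjugate of \<theta>(C (g k)) by \<theta>(c_k).\<close>

lemma theta_apply_conj_X:
  fixes g :: "fvb_gen word" and k :: nat
  assumes "x_tails w m t C"
  defines "\<theta> \<equiv> theta_apply w m (rev g)" and "c \<equiv> x_tail w m g k"
  shows "free_eq (theta_apply w m (g @ t @ rev g) (letter (X k)))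
    ((X k, False) # inv_word (\<theta> c) @ \<theta> (C (x_target g k)) @ \<theta> c)"
proof -
  let ?k = "x_target g k"
  have tY: "free_eq (theta_apply w m t (letter (Y j))) (letter (Y j))" for j
    using assms(1) by (simp add: x_tails_def)
  have tX: "free_eq (theta_apply w m t (letter (X ?k))) (letter (X ?k) @ C ?k)"
    using assms(1) by (simp add: x_tails_def)
  have "theta_apply w m (g @ t @ rev g) (letter (X k)) = \<theta> (theta_apply w m t (letter (X ?k) @ c))"
    unfolding \<theta>_def c_def by (simp only: theta_apply_append theta_apply_X[of w m g] append_Cons append_Nil)
  also have "\<dots> = \<theta> (theta_apply w m t (letter (X ?k)) @ theta_apply w m t c)"
    by (simp only: theta_apply_append_word)
  also have "free_eq \<dots> (\<theta> ((letter (X ?k) @ C ?k) @ c))"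
    unfolding \<theta>_def c_def
    by (rule free_eq_theta_apply, rule free_eq_append[OF tX theta_apply_fixes_y_word[OF tY y_word_x_tail]])
  also have "\<dots> = ((X k, False) # x_tail w m (rev g) ?k) @ \<theta> (C ?k) @ \<theta> c"
    using x_target_append_rev[of g k] unfolding \<theta>_def
    by (simp only: theta_apply_append_word theta_apply_X x_target_append append_assoc)
  also have "free_eq \<dots> (((X k, False) # inv_word (\<theta> c)) @ \<theta> (C ?k) @ \<theta> c)"
    unfolding \<theta>_def c_def by (rule free_eq_append[OF free_eq_Cons[OF x_tail_rev] free_eq_refl])
  finally show ?thesis by simp
qed

lemma supported_in_conj:
  assumes "supported_in w m t S"
  shows "supported_in w m (g @ t @ rev g) {k. x_target g k \<in> S}"
proof -
  obtain C where C: "x_tails w m t C" and triv: "\<And>k. k \<notin> S \<Longrightarrow> free_eq (C k) []"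
    using assms by (auto simp: supported_in_def)
  let ?\<theta> = "theta_apply w m (rev g)" and ?c = "x_tail w m g"
  define E where "E k = inv_word (?\<theta> (?c k)) @ ?\<theta> (C (x_target g k)) @ ?\<theta> (?c k)" for k
  have "x_tails w m (g @ t @ rev g) E"
    using C theta_apply_conj_Y theta_apply_conj_X[OF C]
    by (auto simp: x_tails_def E_def intro: y_word_theta_apply)
  moreover have "free_eq (E k) []" if "x_target g k \<notin> S" for k
    unfolding E_def
    by (intro free_eq_conj_Nil) (use free_eq_theta_apply[OF triv[OF that]] in simp)
  ultimately show ?thesis
    unfolding supported_in_def by blast
qed

lemma supported_in_empty_kernel:
  assumes "supported_in w m u {}"
  shows "free_eq (theta_apply w m u (letter z)) (letter z)"
proof -
  obtain C where C: "x_tails w m u C" "\<And>k. free_eq (C k) []"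
    using assms by (auto simp: supported_in_def)
  show ?thesis
  proof (cases z)
    case (X k)
    have "free_eq (theta_apply w m u (letter (X k))) ((X k, False) # C k)"
      using C by (simp add: x_tails_def)
    also have "free_eq \<dots> (letter (X k))"
      using free_eq_Cons[OF C(2)] by simp
    finally show ?thesis using X by simp
  next
    case (Y j)
    then show ?thesis using C by (simp add: x_tails_def)
  qed
qed

section \<open>Two elements of the kernel\<close>

definition sig :: "nat \<Rightarrow> fvb_gen \<times> bool" where
  "sig i = (Sig i, False)"

definition rho :: "nat \<Rightarrow> fvb_gen \<times> bool" where
  "rho i = (Rho i, False)"

definition t12 :: "fvb_gen word" where
  "t12 = [sig 1, rho 1, sig 1, rho 1]"

definition t13 :: "fvb_gen word" where
  "t13 = [rho 2] @ t12 @ [rho 2]"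

definition t23 :: "fvb_gen word" where
  "t23 = [rho 1] @ t13 @ [rho 1]"

definition word_A :: "fvb_gen word" where
  "word_A = commutator (commutator t13 t23) t12"

definition word_B :: "fvb_gen word" where
  "word_B = rev t13 @ commutator (commutator t12 t13) (rev t23) @ t13"

lemma theta_apply_X_untouched:
  assumes "\<And>a. a \<in> set u \<Longrightarrow> k \<noteq> fvb_idx (fst a) \<and> k \<noteq> Suc (fvb_idx (fst a))"
  shows "theta_apply w m u (letter (X k)) = letter (X k)"
  using assms
proof (induction u)
  case (Cons a u)
  then have "k \<noteq> fvb_idx (fst a) \<and> k \<noteq> Suc (fvb_idx (fst a))" by simp
  then have "theta_gen w m (fst a) (X k) = letter (X k)"
    by (cases "fst a") (auto simp: theta_gen_def fvb_idx_def)
  with Cons show ?case by simp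
qed simp

lemma supported_in_t12: "supported_in w m t12 {1, 2}"
proof -
  have "theta_apply w m t12 (letter (Y j)) = letter (Y j)" for j
    by (simp add: theta_apply_Y t12_def sig_def rho_def y_index_def)
  moreover have "theta_apply w m t12 (letter (X k)) = (X k, False) # x_tail w m t12 k" for k
    using theta_apply_X[of w m t12 k] by (simp add: t12_def sig_def rho_def fvb_idx_def)
  moreover have "x_tail w m t12 k = []" if "k \<notin> {1, 2}" for k
    using that unfolding x_tail_def
    by (subst theta_apply_X_untouched) (auto simp: t12_def sig_def rho_def fvb_idx_def)
  ultimately show ?thesis
    unfolding supported_in_def x_tails_def by (intro exI[of _ "x_tail w m t12"]) auto
qed

lemma supported_in_t13: "supported_in w m t13 {1, 3}"
proof -
  have "supported_in w m ([rho 2] @ t12 @ rev [rho 2]) {1, 3}"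
    by (rule supported_in_mono[OF supported_in_conj[OF supported_in_t12]])
      (auto simp: rho_def fvb_idx_def swap_adj_def)
  then show ?thesis by (simp add: t13_def)
qed

lemma supported_in_t23: "supported_in w m t23 {2, 3}"
proof -
  have "supported_in w m ([rho 1] @ t13 @ rev [rho 1]) {2, 3}"
    by (rule supported_in_mono[OF supported_in_conj[OF supported_in_t13]])
      (auto simp: rho_def fvb_idx_def swap_adj_def)
  then show ?thesis by (simp add: t23_def)
qed

lemma supported_in_word_A: "supported_in w m word_A {}"
  unfolding word_A_def
  using supported_in_commutator[OF supported_in_commutator[OF supported_in_t13 supported_in_t23]
      supported_in_t12]
  by (rule supported_in_mono) auto

lemma supported_in_word_B: "supported_in w m word_B {}"
proof -
  have "supported_in w m (commutator (commutator t12 t13) (rev t23)) {}"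
    using supported_in_commutator[OF supported_in_commutator[OF supported_in_t12 supported_in_t13]
        supported_in_rev[OF supported_in_t23]]
    by (rule supported_in_mono) auto
  then show ?thesis
    unfolding word_B_def using supported_in_conj[of w m _ "{}" "rev t13"]
    by (auto intro: supported_in_mono)
qed

section \<open>Following three strands\<close>

type_synonym strands = "nat \<times> nat \<times> nat"

definition move_strands :: "fvb_gen word \<Rightarrow> strands \<Rightarrow> strands" where
  "move_strands u p = (case p of (p1, p2, p3) \<Rightarrow> (x_target u p1, x_target u p2, x_target u p3))"

fun strand_at :: "strands \<Rightarrow> nat \<Rightarrow> nat" where
  "strand_at (p1, p2, p3) x = (if p1 = x then 1 else if p2 = x then 2 else if p3 = x then 3 else 0)"

text \<open>Three strands, numbered 1, 2, 3, are followed through a word, p recording their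
  positions.  When sigma_i exchanges strand k (at position i) with strand l (at i+1), the letter
  B is recorded for the pair {1,3} (the only one with k + l = 4) and A for the other pairs,
  inverted if l < k.\<close>

definition crossing_word :: "nat \<Rightarrow> nat \<Rightarrow> f2_gen word" where
  "crossing_word k l = (if k = 0 \<or> l = 0 then [] else [(if k + l = 4 then GB else GA, l < k)])"

definition letter_trace :: "fvb_gen \<Rightarrow> strands \<Rightarrow> f2_gen word" where
  "letter_trace g p = (case g of Sig i \<Rightarrow> crossing_word (strand_at p i) (strand_at p (Suc i)) | Rho i \<Rightarrow> [])"

fun trace :: "fvb_gen word \<Rightarrow> strands \<Rightarrow> f2_gen word" where
  "trace [] p = []"
| "trace (a # u) p = letter_trace (fst a) p @ trace u (move_strands [a] p)"

lemma move_strands_Nil [simp]: "move_strands [] p = p"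
  by (cases p) (simp add: move_strands_def)

lemma move_strands_append: "move_strands (u @ v) p = move_strands v (move_strands u p)"
  by (cases p) (simp add: move_strands_def x_target_append)

lemma trace_append: "trace (u @ v) p = trace u p @ trace v (move_strands u p)"
proof (induction u arbitrary: p)
  case (Cons a u)
  then show ?case using move_strands_append[of "[a]" u p] by simp
qed simp

lemma strand_at_move_strands_Cons [simp]:
  "strand_at (move_strands [a] p) x = strand_at p (swap_adj (fvb_idx (fst a)) x)"
  by (cases p) (simp add: move_strands_def swap_adj_eq_iff eq_commute[of _ x])

lemma strand_at_cases: "strand_at p x = 0 \<or> strand_at p x = 1 \<or> strand_at p x = 2 \<or> strand_at p x = 3"
  by (cases p) simp

lemma strand_at_inj: "strand_at p x = strand_at p y \<longrightarrow> strand_at p x = 0 \<or> x = y"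
  by (cases p) simp

definition trivial_relator :: "fvb_gen word \<Rightarrow> bool" where
  "trivial_relator r \<longleftrightarrow> (\<forall>x. x_target r x = x) \<and> (\<forall>p. free_eq (trace r p) [])"

lemma trivial_relatorI:
  "(\<And>x. x_target r x = x) \<Longrightarrow> (\<And>p. free_eq (trace r p) []) \<Longrightarrow> trivial_relator r"
  by (simp add: trivial_relator_def)

lemmas trace_simps = gw_def inv_letter_def letter_trace_def crossing_word_def fvb_idx_def swap_adj_def
  free_eq_Nil_iff reduce_def push_letter_def

lemma free_eq_crossing_word_swap:
  assumes "k \<noteq> l \<or> k = 0"
  shows "free_eq (crossing_word k l @ crossing_word l k) []"
proof (cases "k = 0 \<or> l = 0")
  case False
  with assms have "crossing_word l k = [inv_letter (if k + l = 4 then GB else GA, l < k)]"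
    by (auto simp: crossing_word_def inv_letter_def add.commute)
  with False show ?thesis
    using free_eq_cancel_pair[of "[]" "(if k + l = 4 then GB else GA, l < k)" "[]"]
    by (simp add: crossing_word_def)
qed (auto simp: crossing_word_def)

lemma trivial_relator_square: "trivial_relator [(g, e), (g, e')]"
proof (rule trivial_relatorI)
  fix p
  show "free_eq (trace [(g, e), (g, e')] p) []"
  proof (cases g)
    case (Sig i)
    have "strand_at p i \<noteq> strand_at p (Suc i) \<or> strand_at p i = 0"
      using strand_at_inj[of p i "Suc i"] by auto
    then show ?thesis
      using Sig free_eq_crossing_word_swap by (simp add: letter_trace_def fvb_idx_def swap_adj_def)
  qed (simp add: letter_trace_def)
qed simp

lemma trivial_relator_sig_braid:
  "trivial_relator (gw (Sig i) @ gw (Sig (i+1)) @ gw (Sig i) @ inv_word (gw (Sig (i+1)) @ gw (Sig i) @ gw (Sig (i+1))))"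
  apply (rule trivial_relatorI)
   apply (simp add: trace_simps)
  subgoal for p
    using strand_at_cases[of p i] strand_at_cases[of p "Suc i"] strand_at_cases[of p "Suc (Suc i)"]
      strand_at_inj[of p i "Suc i"] strand_at_inj[of p i "Suc (Suc i)"] strand_at_inj[of p "Suc i" "Suc (Suc i)"]
    by (elim disjE; simp add: trace_simps)
  done

lemma trivial_relator_rho_braid:
  "trivial_relator (gw (Rho i) @ gw (Rho (i+1)) @ gw (Rho i) @ inv_word (gw (Rho (i+1)) @ gw (Rho i) @ gw (Rho (i+1))))"
  by (rule trivial_relatorI) (simp_all add: trace_simps)

lemma trivial_relator_mixed_braid:
  "trivial_relator (gw (Rho i) @ gw (Rho (i+1)) @ gw (Sig i) @ inv_word (gw (Sig (i+1)) @ gw (Rho i) @ gw (Rho (i+1))))"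
  apply (rule trivial_relatorI)
   apply (simp add: trace_simps)
  subgoal for p
    using strand_at_cases[of p i] strand_at_cases[of p "Suc i"] strand_at_cases[of p "Suc (Suc i)"]
      strand_at_inj[of p i "Suc i"] strand_at_inj[of p i "Suc (Suc i)"] strand_at_inj[of p "Suc i" "Suc (Suc i)"]
    by (elim disjE; simp add: trace_simps)
  done

text \<open>Far apart generators cannot both exchange tracked strands: that would take four strands.\<close>

lemma letter_trace_far_eq_Nil:
  assumes "fvb_idx g + 2 \<le> fvb_idx h \<or> fvb_idx h + 2 \<le> fvb_idx g"
  shows "letter_trace g p = [] \<or> letter_trace h p = []"
proof (rule ccontr)
  assume "\<not> ?thesis"
  then obtain i j where ij: "g = Sig i" "h = Sig j"
    and nonzero: "strand_at p i \<noteq> 0" "strand_at p (Suc i) \<noteq> 0" "strand_at p j \<noteq> 0" "strand_at p (Suc j) \<noteq> 0"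
    by (cases g; cases h) (auto simp: letter_trace_def crossing_word_def split: if_split_asm)
  let ?X = "{i, Suc i, j, Suc j}"
  have "x = y" if "x \<in> ?X" "strand_at p x = strand_at p y" for x y
    using that nonzero strand_at_inj[of p x y] by auto
  then have "inj_on (strand_at p) ?X"
    by (intro inj_onI) blast
  moreover have "strand_at p ` ?X \<subseteq> {1, 2, 3}"
    using nonzero strand_at_cases[of p i] strand_at_cases[of p "Suc i"] strand_at_cases[of p j]
      strand_at_cases[of p "Suc j"]
    by auto
  ultimately have "card ?X \<le> card {1, 2, 3 :: nat}"
    by (rule card_inj_on_le) simp
  moreover have "card ?X = 4"
    using assms ij by (auto simp: fvb_idx_def)
  ultimately show False by simp
qed

lemma letter_trace_move_strands_eq_Nil_iff:
  "letter_trace g (move_strands [(g, e)] p) = [] \<longleftrightarrow> letter_trace g p = []"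
  by (cases g) (auto simp: letter_trace_def crossing_word_def fvb_idx_def swap_adj_def)

lemma trivial_relator_commutator:
  assumes far: "fvb_idx g + 2 \<le> fvb_idx h \<or> fvb_idx h + 2 \<le> fvb_idx g"
  shows "trivial_relator (commutator_rel g h)"
proof (rule trivial_relatorI)
  show "x_target (commutator_rel g h) x = x" for x
    using far by (auto simp: commutator_rel_def gw_def swap_adj_def)
  fix p
  let ?a = "letter_trace g p" and ?a' = "letter_trace g (move_strands [(g, False)] p)"
    and ?b = "letter_trace h p" and ?b' = "letter_trace h (move_strands [(h, False)] p)"
  have trace: "trace (commutator_rel g h) p = ?a @ ?b @ ?a' @ ?b'"
    using far by (cases g; cases h) (auto simp: commutator_rel_def gw_def letter_trace_def fvb_idx_def swap_adj_def)
  have "free_eq (trace [(f, False), (f, False)] p) []" for f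
    using trivial_relator_square unfolding trivial_relator_def by blast
  then have squares: "free_eq (?a @ ?a') []" "free_eq (?b @ ?b') []"
    by simp_all
  from far consider "?a = []" | "?b = []"
    using letter_trace_far_eq_Nil by blast
  then show "free_eq (trace (commutator_rel g h) p) []"
  proof cases
    case 1
    then have "?a' = []" by (simp add: letter_trace_move_strands_eq_Nil_iff)
    with 1 show ?thesis using squares(2) by (simp add: trace)
  next
    case 2
    then have "?b' = []" by (simp add: letter_trace_move_strands_eq_Nil_iff)
    with 2 show ?thesis using squares(1) by (simp add: trace)
  qed
qed

lemma trivial_relator_fvb_rels: "r \<in> fvb_rels n \<Longrightarrow> trivial_relator r"
  unfolding fvb_rels_def
  apply (elim UnE; clarify)
         apply (simp add: gw_def trivial_relator_square)
        apply (simp add: gw_def trivial_relator_square)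
       apply (rule trivial_relator_sig_braid)
      apply (rule trivial_relator_rho_braid)
     apply (rule trivial_relator_mixed_braid)
    apply (rule trivial_relator_commutator, simp add: fvb_idx_def)+
  done

lemma trace_drop_trivial_relator:
  assumes "trivial_relator r"
  shows "move_strands (u @ r @ v) p = move_strands (u @ v) p \<and> free_eq (trace (u @ r @ v) p) (trace (u @ v) p)"
proof -
  have "move_strands r q = q" for q
    using assms by (cases q) (simp add: trivial_relator_def move_strands_def)
  moreover have "free_eq (trace r q) []" for q
    using assms unfolding trivial_relator_def by blast
  ultimately show ?thesis
    using free_eq_drop_Nil[of "trace r (move_strands u p)" "trace u p"]
    by (simp add: move_strands_append trace_append)
qed

lemma fvb_eq_imp_trace_free_eq:
  assumes "fvb_eq n u v"
  shows "move_strands u p = move_strands v p \<and> free_eq (trace u p) (trace v p)"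
proof -
  have one_step: "move_strands u p = move_strands v p \<and> free_eq (trace u p) (trace v p)"
    if "pres_step (fvb_rels n) u v" for u v
    using that
  proof cases
    case (1 u x e v)
    then show ?thesis
      using trace_drop_trivial_relator[OF trivial_relator_square] by simp
  next
    case (2 r u v)
    then show ?thesis
      using trace_drop_trivial_relator[OF trivial_relator_fvb_rels] by simp
  qed
  show ?thesis
    using assms unfolding fvb_eq_def pres_eq_def
  proof (induction rule: equivclp_induct)
    case (step y z)
    from step.hyps(2) have "move_strands y p = move_strands z p \<and> free_eq (trace y p) (trace z p)"
    proof
      assume "pres_step (fvb_rels n) z y"
      then show ?thesis using one_step[of z y] by (simp add: free_eq_sym)
    qed (rule one_step)
    with step.IH show ?case
      using free_eq_trans[of "trace u p" "trace y p" "trace z p"] by simp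
  qed simp
qed

lemma trivial_relator_append_rev: "trivial_relator (u @ rev u)"
proof (induction u)
  case (Cons a u)
  have aa: "trivial_relator ([a] @ [a])"
    using trivial_relator_square[of "fst a" "snd a" "snd a"] by simp
  show ?case
  proof (rule trivial_relatorI)
    show "x_target ((a # u) @ rev (a # u)) x = x" for x
      using Cons aa by (simp add: trivial_relator_def x_target_append)
    fix p
    have "free_eq (trace ([a] @ (u @ rev u) @ [a]) p) (trace ([a] @ [a]) p)"
      using trace_drop_trivial_relator[OF Cons] by blast
    moreover have "free_eq (trace ([a] @ [a]) p) []"
      using aa unfolding trivial_relator_def by blast
    ultimately have "free_eq (trace ([a] @ (u @ rev u) @ [a]) p) []"
      by (rule free_eq_trans)
    then show "free_eq (trace ((a # u) @ rev (a # u)) p) []"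
      by simp
  qed
qed (simp add: trivial_relator_def)

lemma trace_rev:
  "move_strands (rev u) (move_strands u p) = p \<and> free_eq (trace (rev u) (move_strands u p)) (inv_word (trace u p))"
proof -
  have "move_strands (u @ rev u) p = p"
    using trivial_relator_append_rev[of u] by (cases p) (simp add: trivial_relator_def move_strands_def)
  moreover have "free_eq (trace u p @ trace (rev u) (move_strands u p)) []"
    using trivial_relator_append_rev[of u] unfolding trivial_relator_def trace_append by blast
  ultimately show ?thesis
    using free_eq_append_Nil_imp_right by (simp add: move_strands_append)
qed

section \<open>The two kernel elements generate a free group\<close>

lemma x_target_inv_word: "x_target (inv_word u) = x_target (rev u)"
  by (induction u) (auto simp: x_target_append)

lemma trace_inv_word: "trace (inv_word u) p = trace (rev u) p"
proof (induction u arbitrary: p)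
  case (Cons a u)
  have "move_strands (inv_word u) p = move_strands (rev u) p"
    by (cases p) (simp add: move_strands_def x_target_inv_word)
  with Cons show ?case by (simp add: trace_append)
qed simp

definition base_strands :: strands where
  "base_strands = (1, 2, 3)"

definition kernel_words :: "f2_gen \<Rightarrow> fvb_gen word" where
  "kernel_words = (\<lambda>g. case g of GA \<Rightarrow> word_A | GB \<Rightarrow> word_B)"

definition trace_images :: "f2_gen \<Rightarrow> f2_gen word" where
  "trace_images g = subst_word (\<lambda>z. [(z, False), (z, False)])
     (case g of
        GA \<Rightarrow> [(GB, False), (GA, False), (GB, True), (GA, False), (GB, False), (GA, True), (GB, True), (GA, True)]
      | GB \<Rightarrow> [(GB, True), (GA, False), (GB, False), (GA, True), (GB, True), (GA, True), (GB, False), (GA, False)])"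

lemma x_target_rev_eq_id: "(\<And>k. x_target u k = k) \<Longrightarrow> x_target (rev u) k = k"
  using x_target_append_rev[of u k] by (simp add: x_target_append)

lemma x_target_kernel_words: "x_target (kernel_words g) k = k"
proof -
  have t12: "x_target t12 k = k" for k
    by (simp add: t12_def sig_def rho_def fvb_idx_def swap_adj_def)
  have t13: "x_target t13 k = k" for k
    using t12 by (simp add: t13_def x_target_append)
  have t23: "x_target t23 k = k" for k
    using t13 by (simp add: t23_def x_target_append)
  show ?thesis
    using t12 t13 t23 x_target_rev_eq_id[of t13] x_target_rev_eq_id[of t23]
    by (cases g) (simp_all add: kernel_words_def word_A_def word_B_def commutator_def x_target_append
        x_target_rev_eq_id)
qed

lemma move_strands_kernel_words: "move_strands (kernel_words g) p = p"
  by (cases p) (simp add: move_strands_def x_target_kernel_words)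

lemma reduce_trace_kernel_words: "reduce (trace (kernel_words g) base_strands) = trace_images g"
  by (cases g)
    (simp_all add: base_strands_def kernel_words_def trace_images_def word_A_def word_B_def commutator_def
      t12_def t13_def t23_def sig_def rho_def letter_trace_def crossing_word_def fvb_idx_def
      swap_adj_def reduce_def push_letter_def inv_letter_def)

lemma trace_subst_word_kernel_words:
  "move_strands (subst_word kernel_words r) base_strands = base_strands \<and>
    free_eq (trace (subst_word kernel_words r) base_strands) (subst_word trace_images r)"
proof (induction r)
  case (Cons a r)
  obtain g e where a: "a = (g, e)" by (cases a)
  let ?u = "kernel_words g" and ?p = "base_strands"
  have image: "free_eq (trace ?u ?p) (trace_images g)"
    unfolding free_eq_iff_reduce_eq reduce_trace_kernel_words[symmetric] by simp
  have block: "move_strands (subst_letter kernel_words a) ?p = ?p \<and>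
      free_eq (trace (subst_letter kernel_words a) ?p) (subst_letter trace_images a)"
  proof (cases e)
    case True
    have "move_strands (inv_word ?u) ?p = move_strands (rev ?u) ?p"
      by (simp add: move_strands_def x_target_inv_word)
    also have "\<dots> = ?p"
      using trace_rev[of ?u ?p] by (simp add: move_strands_kernel_words)
    finally have "move_strands (inv_word ?u) ?p = ?p" .
    moreover have "free_eq (trace (rev ?u) ?p) (inv_word (trace ?u ?p))"
      using trace_rev[of ?u ?p] by (simp add: move_strands_kernel_words)
    then have "free_eq (trace (inv_word ?u) ?p) (inv_word (trace_images g))"
      unfolding trace_inv_word by (rule free_eq_trans[OF _ free_eq_inv_word[OF image]])
    ultimately show ?thesis using a True by simp
  qed (use a image move_strands_kernel_words in simp)
  have "free_eq (trace (subst_letter kernel_words a) ?p @ trace (subst_word kernel_words r) ?p)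
      (subst_letter trace_images a @ subst_word trace_images r)"
    using block Cons by (intro free_eq_append) simp_all
  with block Cons show ?case
    by (simp add: move_strands_append trace_append)
qed simp

lemma subst_word_trace_images_nontrivial:
  assumes "\<not> free_eq r []"
  shows "\<not> free_eq (subst_word trace_images r) []"
proof (rule subst_word_nontrivial[OF _ _ assms])
  show "reduced (subst_letter trace_images a) \<and> subst_letter trace_images a \<noteq> []" for a
    by (cases a; cases "fst a") (auto simp: trace_images_def inv_letter_def)
  show "hd (subst_letter trace_images b) \<noteq> inv_letter (last (subst_letter trace_images a))"
    if "b \<noteq> inv_letter a" for a b
    using that by (cases a; cases b; cases "fst a"; cases "fst b") (auto simp: trace_images_def inv_letter_def)
qed

lemma subst_word_kernel_words_nontrivial:
  assumes "\<not> free_eq r []"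
  shows "\<not> fvb_eq n (subst_word kernel_words r) []"
proof
  assume "fvb_eq n (subst_word kernel_words r) []"
  then have "free_eq (trace (subst_word kernel_words r) base_strands) []"
    using fvb_eq_imp_trace_free_eq by fastforce
  then have "free_eq (subst_word trace_images r) []"
    using trace_subst_word_kernel_words free_eq_sym free_eq_trans by blast
  with subst_word_trace_images_nontrivial[OF assms] show False ..
qed

lemma fvb_word_kernel_words: "n \<ge> 3 \<Longrightarrow> fvb_word n (kernel_words g)"
  by (cases g) (auto simp: fvb_word_def kernel_words_def word_A_def word_B_def commutator_def
      t12_def t13_def t23_def sig_def rho_def fvb_idx_def)

lemma in_theta_kernel_kernel_words: "in_theta_kernel n w m (kernel_words g)"
  using supported_in_empty_kernel supported_in_word_A supported_in_word_B
  by (cases g) (auto simp: in_theta_kernel_def kernel_words_def)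

theorem mainTheorem10:
  fixes n :: nat and w :: "f2_gen word" and m :: "nat \<Rightarrow> int"
  assumes "n \<ge> 3"
  shows "kernel_contains_F2 n w m"
proof -
  have "fvb_word n (kernel_words g) \<and> in_theta_kernel n w m (kernel_words g)" for g
    using fvb_word_kernel_words[OF assms] in_theta_kernel_kernel_words by blast
  from this[of GA] this[of GB] subst_word_kernel_words_nontrivial[of _ n]
  show ?thesis
    unfolding kernel_contains_F2_def by (intro exI[of _ word_A] exI[of _ word_B]) (simp add: kernel_words_def)
qed

end
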